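(* Let $\mu,\nu\in P_1(\mathbb{R}^d)$. The following are equivalent: (i) $\int\varphi\,d\mu\le\int\varphi\,d\nu$ for every lower semicontinuous proper convex $\varphi:\mathbb{R}^d\to\mathbb{R}\cup\{+\infty\}$ such that both integrals exist in the extended sense; (ii) $\int\varphi\,d\mu\le\int\varphi\,d\nu$ for every lower semicontinuous proper convex $\varphi$ which is bounded from below; (iii) $\int\varphi\,d\mu\le\int\varphi\,d\nu$ for every Lipschitz continuous convex $\varphi:\mathbb{R}^d\to\mathbb{R}$.
   Context: $P_1(\mathbb{R}^d)$ is the set of Borel probability measures on $\mathbb{R}^d$ with finite first moment. *)

theory Defs
  imports "HOL-Analysis.Analysis" "HOL-Probability.Probability"
begin

definition P1 :: "'a::euclidean_space measure \<Rightarrow> bool" where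
  "P1 M \<longleftrightarrow> sets M = sets borel \<and> prob_space M \<and> integrable M (\<lambda>x. norm x)"

definition lsc :: "('a::topological_space \<Rightarrow> ereal) \<Rightarrow> bool" where
  "lsc f \<longleftrightarrow> (\<forall>x. f x \<le> Liminf (at x) f)"

definition ereal_convex :: "('a::real_vector \<Rightarrow> ereal) \<Rightarrow> bool" where
  "ereal_convex f \<longleftrightarrow> (\<forall>x y. \<forall>t::real. 0 < t \<and> t < 1 \<longrightarrow>
      f (t *\<^sub>R x + (1 - t) *\<^sub>R y) \<le> ereal t * f x + ereal (1 - t) * f y)"

definition proper_fun :: "('a \<Rightarrow> ereal) \<Rightarrow> bool" where
  "proper_fun f \<longleftrightarrow> (\<forall>x. f x \<noteq> -\<infinity>) \<and> (\<exists>x. f x \<noteq> \<infinity>)"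

definition ext_integral :: "'a measure \<Rightarrow> ('a \<Rightarrow> ereal) \<Rightarrow> ereal" where
  "ext_integral M f =
     enn2ereal (\<integral>\<^sup>+x. e2ennreal (f x) \<partial>M) - enn2ereal (\<integral>\<^sup>+x. e2ennreal (- f x) \<partial>M)"

definition ext_integral_exists :: "'a measure \<Rightarrow> ('a \<Rightarrow> ereal) \<Rightarrow> bool" where
  "ext_integral_exists M f \<longleftrightarrow>
     (\<integral>\<^sup>+x. e2ennreal (f x) \<partial>M) < \<infinity> \<or> (\<integral>\<^sup>+x. e2ennreal (- f x) \<partial>M) < \<infinity>"

end

theory Submission
  imports Defs
begin

(*
  A bounded-below function always has an extended integral, so (i) implies (ii). Conversely, if
  the integrals of \<phi> exist, the truncations max \<phi> (-n) are admissible in (ii); their positive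
  parts agree with that of \<phi> and their negative parts increase to that of \<phi>, so their integrals
  converge to those of \<phi>. A Lipschitz convex function is integrable under a measure with finite
  first moment and is therefore a test function in (i). Finally, a bounded-below lsc proper convex
  \<phi> is the increasing pointwise limit of its Pasch-Hausdorff envelopes
  inf\<^sub>y (\<phi> y + n |x - y|), which are convex and n-Lipschitz, and monotone convergence carries
  (iii) over to \<phi>.
*)

lemma lsc_iff_eventually:
  "lsc f \<longleftrightarrow> (\<forall>x M. M < f x \<longrightarrow> eventually (\<lambda>y. M < f y) (at x))"
  unfolding lsc_def by (simp add: le_Liminf_iff)

lemma open_superlevel_lsc:
  assumes "lsc f"
  shows "open {x. M < f x}"
proof (rule Topological_Spaces.openI)
  fix x assume "x \<in> {x. M < f x}"
  then have "M < f x" by simp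
  then have "eventually (\<lambda>y. M < f y) (at x)"
    using assms unfolding lsc_iff_eventually by blast
  then obtain S where "open S" "x \<in> S" "\<forall>y\<in>S. y \<noteq> x \<longrightarrow> M < f y"
    unfolding eventually_at_topological by blast
  then show "\<exists>S. open S \<and> x \<in> S \<and> S \<subseteq> {x. M < f x}"
    using \<open>M < f x\<close> by (intro exI[of _ S]) auto
qed

lemma borel_measurable_lsc: "lsc f \<Longrightarrow> f \<in> borel_measurable borel"
  by (rule borel_measurableI_greater) (simp add: open_superlevel_lsc)

lemma lsc_continuous_on:
  assumes "continuous_on UNIV g"
  shows "lsc (\<lambda>x. ereal (g x))"
  unfolding lsc_iff_eventually
proof (intro allI impI)
  fix x M assume "M < ereal (g x)"
  have "((\<lambda>y. ereal (g y)) \<longlongrightarrow> ereal (g x)) (at x)"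
    using assms by (intro tendsto_ereal) (simp add: continuous_on_def)
  then show "eventually (\<lambda>y. M < ereal (g y)) (at x)"
    using \<open>M < ereal (g x)\<close> by (rule order_tendstoD)
qed

lemma lsc_max:
  assumes "lsc f"
  shows "lsc (\<lambda>x. max (f x) k)"
  unfolding lsc_iff_eventually
proof (intro allI impI)
  fix x M assume M: "M < max (f x) k"
  show "eventually (\<lambda>y. M < max (f y) k) (at x)"
  proof (cases "M < f x")
    case True
    then have "eventually (\<lambda>y. M < f y) (at x)"
      using assms unfolding lsc_iff_eventually by blast
    then show ?thesis by (rule eventually_mono) (simp add: less_max_iff_disj)
  next
    case False
    then show ?thesis using M by (simp add: less_max_iff_disj)
  qed
qed

lemma ereal_convex_max:
  assumes "ereal_convex f"
  shows "ereal_convex (\<lambda>x. max (f x) (ereal k))"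
  unfolding ereal_convex_def
proof (intro allI impI)
  fix x y and t :: real assume t: "0 < t \<and> t < 1"
  let ?m = "\<lambda>x. max (f x) (ereal k)"
  have "f (t *\<^sub>R x + (1 - t) *\<^sub>R y) \<le> ereal t * f x + ereal (1 - t) * f y"
    using assms t unfolding ereal_convex_def by blast
  also have "\<dots> \<le> ereal t * ?m x + ereal (1 - t) * ?m y"
    using t by (intro add_mono ereal_mult_left_mono) auto
  finally have f: "f (t *\<^sub>R x + (1 - t) *\<^sub>R y) \<le> ereal t * ?m x + ereal (1 - t) * ?m y" .
  have "ereal k = ereal t * ereal k + ereal (1 - t) * ereal k"
    by (simp add: algebra_simps)
  also have "\<dots> \<le> ereal t * ?m x + ereal (1 - t) * ?m y"
    using t by (intro add_mono ereal_mult_left_mono) auto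
  finally have "ereal k \<le> ereal t * ?m x + ereal (1 - t) * ?m y" .
  with f show "?m (t *\<^sub>R x + (1 - t) *\<^sub>R y) \<le> ereal t * ?m x + ereal (1 - t) * ?m y"
    by (rule max.boundedI)
qed

lemma ereal_convex_convex_on:
  assumes "convex_on UNIV f"
  shows "ereal_convex (\<lambda>x. ereal (f x))"
  unfolding ereal_convex_def
proof (intro allI impI)
  fix x y and t :: real assume "0 < t \<and> t < 1"
  then have "f (t *\<^sub>R x + (1 - t) *\<^sub>R y) \<le> t * f x + (1 - t) * f y"
    using convex_onD[OF assms, of "1 - t" x y] by simp
  then show "ereal (f (t *\<^sub>R x + (1 - t) *\<^sub>R y)) \<le> ereal t * ereal (f x) + ereal (1 - t) * ereal (f y)"
    by simp
qed

lemma ext_integral_real: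
  assumes "integrable M f"
  shows "ext_integral M (\<lambda>x. ereal (f x)) = ereal (\<integral>x. f x \<partial>M)"
proof -
  obtain p n where "(\<integral>\<^sup>+x. ennreal (f x) \<partial>M) = ennreal p" "0 \<le> p"
      "(\<integral>\<^sup>+x. ennreal (- f x) \<partial>M) = ennreal n" "0 \<le> n"
    using assms unfolding real_integrable_def by (auto simp: less_top less_top_ennreal)
  then show ?thesis
    unfolding ext_integral_def real_lebesgue_integral_def[OF assms] by simp
qed

lemma ext_integral_exists_real:
  "integrable M f \<Longrightarrow> ext_integral_exists M (\<lambda>x. ereal (f x))"
  unfolding ext_integral_exists_def real_integrable_def by (simp add: less_top[symmetric])

lemma e2ennreal_uminus_le:
  assumes "ereal c \<le> u"
  shows "e2ennreal (- u) \<le> ennreal (- c)"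
proof -
  have "- u \<le> - ereal c" using assms by (simp only: ereal_minus_le_minus)
  then show ?thesis by (metis e2ennreal_ereal e2ennreal_mono uminus_ereal.simps(1))
qed

lemma ext_integral_exists_bounded_below:
  assumes "finite_measure M" and "\<And>x. ereal c \<le> f x"
  shows "ext_integral_exists M f"
proof -
  have "(\<integral>\<^sup>+x. e2ennreal (- f x) \<partial>M) \<le> (\<integral>\<^sup>+x. ennreal (- c) \<partial>M)"
    using assms(2) by (intro nn_integral_mono e2ennreal_uminus_le)
  also have "\<dots> < \<infinity>"
    using assms(1) by (simp add: ennreal_mult_eq_top_iff finite_measure.emeasure_finite less_top[symmetric])
  finally show ?thesis unfolding ext_integral_exists_def by blast
qed

lemma ext_integral_tendstoI:
  assumes "((\<lambda>i. \<integral>\<^sup>+x. e2ennreal (f i x) \<partial>M) \<longlongrightarrow> (\<integral>\<^sup>+x. e2ennreal (g x) \<partial>M)) F"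
    and "((\<lambda>i. \<integral>\<^sup>+x. e2ennreal (- f i x) \<partial>M) \<longlongrightarrow> (\<integral>\<^sup>+x. e2ennreal (- g x) \<partial>M)) F"
    and "ext_integral_exists M g"
  shows "((\<lambda>i. ext_integral M (f i)) \<longlongrightarrow> ext_integral M g) F"
  using assms unfolding ext_integral_def ext_integral_exists_def
  by (intro tendsto_diff_ereal_general tendsto_enn2erealI) auto

lemma ext_integral_monotone_convergence:
  assumes "finite_measure M"
    and [measurable]: "\<And>i. f i \<in> borel_measurable M" "g \<in> borel_measurable M"
    and "incseq f" and bounded: "\<And>i x. ereal c \<le> f i x"
    and lim: "\<And>x. (\<lambda>i. f i x) \<longlonglongrightarrow> g x"
  shows "(\<lambda>i. ext_integral M (f i)) \<longlonglongrightarrow> ext_integral M g"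
proof (rule ext_integral_tendstoI)
  show "(\<lambda>i. \<integral>\<^sup>+x. e2ennreal (f i x) \<partial>M) \<longlonglongrightarrow> (\<integral>\<^sup>+x. e2ennreal (g x) \<partial>M)"
  proof (rule nn_integral_LIMSEQ)
    show "incseq (\<lambda>i x. e2ennreal (f i x))"
      using \<open>incseq f\<close> by (auto simp: incseq_def le_fun_def intro: e2ennreal_mono)
  qed (auto intro: tendsto_e2ennrealI lim)
  show "(\<lambda>i. \<integral>\<^sup>+x. e2ennreal (- f i x) \<partial>M) \<longlonglongrightarrow> (\<integral>\<^sup>+x. e2ennreal (- g x) \<partial>M)"
  proof (rule nn_integral_dominated_convergence[where w = "\<lambda>_. ennreal (- c)"])
    show "(\<integral>\<^sup>+x. ennreal (- c) \<partial>M) < \<infinity>"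
      using assms(1) by (simp add: ennreal_mult_eq_top_iff finite_measure.emeasure_finite less_top[symmetric])
  qed (auto intro!: tendsto_e2ennrealI lim e2ennreal_uminus_le bounded)
  have "ereal c \<le> g x" for x
    using lim by (rule LIMSEQ_le_const) (simp add: bounded)
  then show "ext_integral_exists M g"
    by (intro ext_integral_exists_bounded_below[OF assms(1)])
qed

lemma e2ennreal_max_nonpos:
  assumes "k \<le> 0"
  shows "e2ennreal (max u (ereal k)) = e2ennreal u"
proof -
  have "max 0 (ereal k) = 0" using assms by (simp add: max_absorb1 zero_ereal_def)
  then have "max 0 (max u (ereal k)) = max 0 u" by (metis max.assoc max.commute)
  then show ?thesis unfolding e2ennreal_def by simp
qed

lemma ext_integral_max_tendsto:
  assumes [measurable]: "f \<in> borel_measurable M" and "ext_integral_exists M f"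
  shows "(\<lambda>i::nat. ext_integral M (\<lambda>x. max (f x) (ereal (- real i)))) \<longlonglongrightarrow> ext_integral M f"
proof (rule ext_integral_tendstoI)
  show "(\<lambda>i::nat. \<integral>\<^sup>+x. e2ennreal (max (f x) (ereal (- real i))) \<partial>M) \<longlonglongrightarrow> (\<integral>\<^sup>+x. e2ennreal (f x) \<partial>M)"
    by (simp add: e2ennreal_max_nonpos)
  have min: "- max u (ereal (- real i)) = min (- u) (ereal (real i))" for u i
    by (cases u) (auto simp: max_def min_def)
  show "(\<lambda>i::nat. \<integral>\<^sup>+x. e2ennreal (- max (f x) (ereal (- real i))) \<partial>M) \<longlonglongrightarrow> (\<integral>\<^sup>+x. e2ennreal (- f x) \<partial>M)"
    unfolding min
  proof (rule nn_integral_LIMSEQ)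
    show "incseq (\<lambda>i x. e2ennreal (min (- f x) (ereal (real i))))"
      by (auto simp: incseq_def le_fun_def intro!: e2ennreal_mono min.mono)
    fix x
    have "(\<lambda>i::nat. min (- f x) (ereal (real i))) \<longlonglongrightarrow> min (- f x) \<infinity>"
      by (intro tendsto_min tendsto_const id_nat_ereal_tendsto_PInf)
    then show "(\<lambda>i::nat. e2ennreal (min (- f x) (ereal (real i)))) \<longlonglongrightarrow> e2ennreal (- f x)"
      by (auto intro: tendsto_e2ennrealI)
  qed simp
qed (rule assms(2))

(* A conditionally complete infimum: it is meaningful only for f proper and bounded below,
   as assumed in all lemmas below. *)
definition pasch_hausdorff :: "('a::metric_space \<Rightarrow> ereal) \<Rightarrow> real \<Rightarrow> 'a \<Rightarrow> real" where
  "pasch_hausdorff f L x = (INF y\<in>{y. f y \<noteq> \<infinity>}. real_of_ereal (f y) + L * dist x y)"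

lemma ereal_real_of_ereal_bounded_below:
  assumes "ereal c \<le> u" and "u \<noteq> \<infinity>"
  shows "u = ereal (real_of_ereal u)" and "c \<le> real_of_ereal u"
  using assms by (cases u; simp)+

context
  fixes f :: "'a::metric_space \<Rightarrow> ereal" and c :: real
  assumes proper: "proper_fun f" and bounded: "\<And>x. ereal c \<le> f x"
begin

private lemmas finite_value = ereal_real_of_ereal_bounded_below(1)[OF bounded]
  and finite_value_ge = ereal_real_of_ereal_bounded_below(2)[OF bounded]

lemma pasch_hausdorff_le:
  assumes "0 \<le> L" and "f y \<noteq> \<infinity>"
  shows "pasch_hausdorff f L x \<le> real_of_ereal (f y) + L * dist x y"
  unfolding pasch_hausdorff_def
proof (rule cINF_lower)
  show "bdd_below ((\<lambda>y. real_of_ereal (f y) + L * dist x y) ` {y. f y \<noteq> \<infinity>})"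
    using assms(1) by (auto intro!: bdd_belowI[of _ c] add_increasing2 finite_value_ge)
qed (use assms(2) in simp)

lemma pasch_hausdorff_greatest:
  "(\<And>y. f y \<noteq> \<infinity> \<Longrightarrow> M \<le> real_of_ereal (f y) + L * dist x y) \<Longrightarrow> M \<le> pasch_hausdorff f L x"
  unfolding pasch_hausdorff_def using proper unfolding proper_fun_def by (intro cINF_greatest) auto

lemma pasch_hausdorff_ge: "0 \<le> L \<Longrightarrow> c \<le> pasch_hausdorff f L x"
  by (rule pasch_hausdorff_greatest) (auto intro: add_increasing2 finite_value_ge)

lemma pasch_hausdorff_le_fun:
  assumes "0 \<le> L"
  shows "ereal (pasch_hausdorff f L x) \<le> f x"
proof (cases "f x = \<infinity>")
  case False
  have "pasch_hausdorff f L x \<le> real_of_ereal (f x)"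
    using pasch_hausdorff_le[OF assms False, of x] by simp
  then show ?thesis by (subst finite_value[OF False]) simp
qed simp

lemma pasch_hausdorff_mono:
  assumes "0 \<le> L" "L \<le> L'"
  shows "pasch_hausdorff f L x \<le> pasch_hausdorff f L' x"
proof (rule pasch_hausdorff_greatest)
  fix y assume "f y \<noteq> \<infinity>"
  then have "pasch_hausdorff f L x \<le> real_of_ereal (f y) + L * dist x y"
    by (rule pasch_hausdorff_le[OF assms(1)])
  also have "\<dots> \<le> real_of_ereal (f y) + L' * dist x y"
    using assms(2) by (simp add: mult_right_mono)
  finally show "pasch_hausdorff f L x \<le> real_of_ereal (f y) + L' * dist x y" .
qed

lemma pasch_hausdorff_lipschitz:
  assumes "0 \<le> L"
  shows "L-lipschitz_on UNIV (pasch_hausdorff f L)"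
proof (rule lipschitz_onI)
  have one_sided: "pasch_hausdorff f L x \<le> pasch_hausdorff f L x' + L * dist x x'" for x x'
  proof -
    have "pasch_hausdorff f L x - L * dist x x' \<le> pasch_hausdorff f L x'"
    proof (rule pasch_hausdorff_greatest)
      fix y assume "f y \<noteq> \<infinity>"
      then have "pasch_hausdorff f L x \<le> real_of_ereal (f y) + L * dist x y"
        by (rule pasch_hausdorff_le[OF assms])
      moreover have "L * dist x y \<le> L * dist x' y + L * dist x x'"
        using assms dist_triangle[of x y x'] by (simp add: dist_commute distrib_left[symmetric] mult_left_mono)
      ultimately show "pasch_hausdorff f L x - L * dist x x' \<le> real_of_ereal (f y) + L * dist x' y"
        by simp
    qed
    then show ?thesis by simp
  qed
  show "dist (pasch_hausdorff f L x) (pasch_hausdorff f L y) \<le> L * dist x y" for x y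
    using one_sided[of x y] one_sided[of y x] by (simp add: dist_real_def dist_commute abs_le_iff)
qed (rule assms)

lemma tendsto_pasch_hausdorff:
  assumes "lsc f"
  shows "(\<lambda>n::nat. ereal (pasch_hausdorff f n x)) \<longlonglongrightarrow> f x"
proof (rule order_tendstoI)
  fix z assume "f x < z"
  have "ereal (pasch_hausdorff f (real n) x) < z" for n :: nat
    using pasch_hausdorff_le_fun[of "real n" x] \<open>f x < z\<close> by simp
  then show "eventually (\<lambda>n. ereal (pasch_hausdorff f n x) < z) sequentially"
    by simp
next
  fix z assume "z < f x"
  then obtain M where M: "z < ereal M" "ereal M < f x" using ereal_dense2 by blast
  (* lsc makes f > M on a ball around x; outside the ball the penalty n r dominates *)
  obtain r where r: "0 < r" "ball x r \<subseteq> {y. ereal M < f y}"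
    using open_superlevel_lsc[OF assms] M(2) by (meson mem_Collect_eq openE)
  obtain N :: nat where N: "(M - c) / r \<le> N" using real_arch_simple by blast
  have "M \<le> pasch_hausdorff f n x" if "N \<le> n" for n :: nat
  proof (rule pasch_hausdorff_greatest)
    fix y assume y: "f y \<noteq> \<infinity>"
    show "M \<le> real_of_ereal (f y) + real n * dist x y"
    proof (cases "dist x y < r")
      case True
      then have "ereal M < f y" using r(2) by auto
      then have "M < real_of_ereal (f y)" by (subst (asm) finite_value[OF y]) simp
      then show ?thesis by (simp add: add_increasing2 order_less_imp_le)
    next
      case False
      have "M - c \<le> N * r" using N r(1) by (simp add: pos_divide_le_eq)
      also have "\<dots> \<le> n * dist x y" using False that r(1) by (intro mult_mono) auto
      finally show ?thesis using finite_value_ge[OF y] by simp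
    qed
  qed
  then show "eventually (\<lambda>n. z < ereal (pasch_hausdorff f n x)) sequentially"
    unfolding eventually_sequentially using M(1) by (meson ereal_less_eq(3) less_le_trans)
qed

end

lemma pasch_hausdorff_convex:
  fixes f :: "'a::real_normed_vector \<Rightarrow> ereal"
  assumes proper: "proper_fun f" and bounded: "\<And>x. ereal c \<le> f x" and convex: "ereal_convex f"
    and L: "0 \<le> L"
  shows "convex_on UNIV (pasch_hausdorff f L)"
proof (rule convex_onI)
  let ?g = "\<lambda>y. real_of_ereal (f y)"
  note finite_value = ereal_real_of_ereal_bounded_below(1)[OF bounded]
  have near_minimizer: "\<exists>y. f y \<noteq> \<infinity> \<and> ?g y + L * dist x y < pasch_hausdorff f L x + e"
    if "0 < e" for x e
  proof (rule ccontr)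
    assume "\<nexists>y. f y \<noteq> \<infinity> \<and> ?g y + L * dist x y < pasch_hausdorff f L x + e"
    then have "pasch_hausdorff f L x + e \<le> pasch_hausdorff f L x"
      by (intro pasch_hausdorff_greatest[OF proper bounded]) (auto simp: not_less)
    then show False using that by simp
  qed
  fix t :: real and x1 x2 :: 'a assume t: "0 < t" "t < 1"
  let ?z = "(1 - t) *\<^sub>R x1 + t *\<^sub>R x2"
  show "pasch_hausdorff f L ?z \<le> (1 - t) * pasch_hausdorff f L x1 + t * pasch_hausdorff f L x2"
  proof (rule field_le_epsilon)
    fix e :: real assume "0 < e"
    obtain y1 where y1: "f y1 \<noteq> \<infinity>" "?g y1 + L * dist x1 y1 < pasch_hausdorff f L x1 + e"
      using near_minimizer[OF \<open>0 < e\<close>] by blast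
    obtain y2 where y2: "f y2 \<noteq> \<infinity>" "?g y2 + L * dist x2 y2 < pasch_hausdorff f L x2 + e"
      using near_minimizer[OF \<open>0 < e\<close>] by blast
    let ?y = "(1 - t) *\<^sub>R y1 + t *\<^sub>R y2"
    have "f ?y \<le> ereal (1 - t) * f y1 + ereal t * f y2"
      using convex[unfolded ereal_convex_def, rule_format, of "1 - t" y1 y2] t by simp
    also have "\<dots> = ereal ((1 - t) * ?g y1 + t * ?g y2)"
      by (subst finite_value[OF y1(1)], subst finite_value[OF y2(1)]) simp
    finally have fy: "f ?y \<le> ereal ((1 - t) * ?g y1 + t * ?g y2)" .
    then have y: "f ?y \<noteq> \<infinity>" by auto
    have gy: "?g ?y \<le> (1 - t) * ?g y1 + t * ?g y2"
      using fy by (subst (asm) finite_value[OF y]) simp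
    have "dist ?z ?y = norm ((1 - t) *\<^sub>R (x1 - y1) + t *\<^sub>R (x2 - y2))"
      by (simp add: dist_norm algebra_simps)
    also have "\<dots> \<le> (1 - t) * dist x1 y1 + t * dist x2 y2"
      using t by (metis (no_types, lifting) abs_of_pos diff_gt_0_iff_gt dist_norm norm_scaleR norm_triangle_ineq)
    finally have d: "dist ?z ?y \<le> (1 - t) * dist x1 y1 + t * dist x2 y2" .
    have "pasch_hausdorff f L ?z \<le> ?g ?y + L * dist ?z ?y"
      by (rule pasch_hausdorff_le[OF proper bounded L y])
    also have "\<dots> \<le> (1 - t) * ?g y1 + t * ?g y2 + L * ((1 - t) * dist x1 y1 + t * dist x2 y2)"
      using gy d L by (intro add_mono mult_left_mono) auto
    also have "\<dots> = (1 - t) * (?g y1 + L * dist x1 y1) + t * (?g y2 + L * dist x2 y2)"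
      by (simp add: algebra_simps)
    also have "\<dots> \<le> (1 - t) * (pasch_hausdorff f L x1 + e) + t * (pasch_hausdorff f L x2 + e)"
      using y1(2) y2(2) t by (intro add_mono[OF mult_left_mono mult_left_mono]) auto
    also have "\<dots> = (1 - t) * pasch_hausdorff f L x1 + t * pasch_hausdorff f L x2 + e"
      by (simp add: algebra_simps)
    finally show "pasch_hausdorff f L ?z \<le> (1 - t) * pasch_hausdorff f L x1 + t * pasch_hausdorff f L x2 + e" .
  qed
qed simp

lemma measurable_P1: "P1 M \<Longrightarrow> measurable M N = measurable borel N"
  unfolding P1_def by (intro measurable_cong_sets) auto

lemma integrable_lipschitz_P1:
  fixes f :: "'a::euclidean_space \<Rightarrow> real"
  assumes "P1 M" and lip: "L-lipschitz_on UNIV f"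
  shows "integrable M f"
proof (rule Bochner_Integration.integrable_bound)
  have "finite_measure M" "integrable M norm"
    using assms(1) unfolding P1_def by (auto intro: prob_space.finite_measure)
  then show "integrable M (\<lambda>x. \<bar>f 0\<bar> + L * norm x)"
    by (intro Bochner_Integration.integrable_add finite_measure.integrable_const integrable_mult_right)
  show "f \<in> borel_measurable M"
    using assms(1) lipschitz_on_continuous_on[OF lip]
    by (simp add: measurable_P1 borel_measurable_continuous_onI)
  have "\<bar>f x\<bar> \<le> \<bar>f 0\<bar> + L * norm x" for x
    using lipschitz_onD[OF lip, of x 0] by (simp add: dist_real_def)
  moreover have "0 \<le> L" using lip by (rule lipschitz_on_nonneg)
  ultimately show "AE x in M. norm (f x) \<le> norm (\<bar>f 0\<bar> + L * norm x)"
    by (auto intro: order_trans)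
qed

definition convex_order_ext :: "'a::real_normed_vector measure \<Rightarrow> 'a measure \<Rightarrow> bool" where
  "convex_order_ext \<mu> \<nu> \<longleftrightarrow> (\<forall>\<phi>::'a \<Rightarrow> ereal. lsc \<phi> \<and> proper_fun \<phi> \<and> ereal_convex \<phi>
      \<and> ext_integral_exists \<mu> \<phi> \<and> ext_integral_exists \<nu> \<phi>
      \<longrightarrow> ext_integral \<mu> \<phi> \<le> ext_integral \<nu> \<phi>)"

definition convex_order_bdd_below :: "'a::real_normed_vector measure \<Rightarrow> 'a measure \<Rightarrow> bool" where
  "convex_order_bdd_below \<mu> \<nu> \<longleftrightarrow> (\<forall>\<phi>::'a \<Rightarrow> ereal. lsc \<phi> \<and> proper_fun \<phi> \<and> ereal_convex \<phi>
      \<and> (\<exists>c::real. \<forall>x. ereal c \<le> \<phi> x)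
      \<longrightarrow> ext_integral \<mu> \<phi> \<le> ext_integral \<nu> \<phi>)"

definition convex_order_lipschitz :: "'a::real_normed_vector measure \<Rightarrow> 'a measure \<Rightarrow> bool" where
  "convex_order_lipschitz \<mu> \<nu> \<longleftrightarrow> (\<forall>\<phi>::'a \<Rightarrow> real. (\<exists>L. L-lipschitz_on UNIV \<phi>) \<and> convex_on UNIV \<phi>
      \<longrightarrow> (\<integral>x. \<phi> x \<partial>\<mu>) \<le> (\<integral>x. \<phi> x \<partial>\<nu>))"

lemma convex_order_ext_imp_bdd_below:
  assumes "finite_measure \<mu>" "finite_measure \<nu>" "convex_order_ext \<mu> \<nu>"
  shows "convex_order_bdd_below \<mu> \<nu>"
  unfolding convex_order_bdd_below_def
proof (intro allI impI, elim conjE exE)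
  fix \<phi> :: "'a \<Rightarrow> ereal" and c :: real
  assume "lsc \<phi>" "proper_fun \<phi>" "ereal_convex \<phi>" and bounded: "\<forall>x. ereal c \<le> \<phi> x"
  moreover have "ext_integral_exists \<mu> \<phi>" "ext_integral_exists \<nu> \<phi>"
    using bounded assms(1,2) by (auto intro: ext_integral_exists_bounded_below)
  ultimately show "ext_integral \<mu> \<phi> \<le> ext_integral \<nu> \<phi>"
    using assms(3) unfolding convex_order_ext_def by blast
qed

lemma convex_order_bdd_below_imp_ext:
  assumes "sets \<mu> = sets borel" "sets \<nu> = sets borel" and order: "convex_order_bdd_below \<mu> \<nu>"
  shows "convex_order_ext \<mu> \<nu>"
  unfolding convex_order_ext_def
proof (intro allI impI, elim conjE)
  fix \<phi> :: "'a \<Rightarrow> ereal"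
  assume lsc: "lsc \<phi>" and proper: "proper_fun \<phi>" and convex: "ereal_convex \<phi>"
    and exists: "ext_integral_exists \<mu> \<phi>" "ext_integral_exists \<nu> \<phi>"
  let ?\<Phi> = "\<lambda>i::nat. \<lambda>x. max (\<phi> x) (ereal (- real i))"
  have "ext_integral \<mu> (?\<Phi> i) \<le> ext_integral \<nu> (?\<Phi> i)" for i
  proof -
    have "proper_fun (?\<Phi> i)"
      using proper unfolding proper_fun_def by (auto simp: max_def)
    moreover have "\<forall>x. ereal (- real i) \<le> ?\<Phi> i x" by simp
    ultimately show ?thesis
      using order lsc_max[OF lsc] ereal_convex_max[OF convex]
      unfolding convex_order_bdd_below_def by blast
  qed
  moreover have "\<phi> \<in> borel_measurable \<mu>" "\<phi> \<in> borel_measurable \<nu>"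
    using borel_measurable_lsc[OF lsc] measurable_cong_sets[OF assms(1) refl]
      measurable_cong_sets[OF assms(2) refl] by auto
  ultimately show "ext_integral \<mu> \<phi> \<le> ext_integral \<nu> \<phi>"
    using exists by (intro LIMSEQ_le[OF ext_integral_max_tendsto ext_integral_max_tendsto]) auto
qed

lemma convex_order_ext_imp_lipschitz:
  fixes \<mu> \<nu> :: "'a::euclidean_space measure"
  assumes "P1 \<mu>" "P1 \<nu>" and order: "convex_order_ext \<mu> \<nu>"
  shows "convex_order_lipschitz \<mu> \<nu>"
  unfolding convex_order_lipschitz_def
proof (intro allI impI, elim conjE exE)
  fix \<phi> :: "'a \<Rightarrow> real" and L assume lip: "L-lipschitz_on UNIV \<phi>" and convex: "convex_on UNIV \<phi>"
  have integrable: "integrable \<mu> \<phi>" "integrable \<nu> \<phi>"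
    using integrable_lipschitz_P1[OF _ lip] assms(1,2) by auto
  have "lsc (\<lambda>x. ereal (\<phi> x))"
    by (intro lsc_continuous_on lipschitz_on_continuous_on[OF lip])
  moreover have "proper_fun (\<lambda>x. ereal (\<phi> x))" unfolding proper_fun_def by simp
  ultimately have "ext_integral \<mu> (\<lambda>x. ereal (\<phi> x)) \<le> ext_integral \<nu> (\<lambda>x. ereal (\<phi> x))"
    using order ereal_convex_convex_on[OF convex] ext_integral_exists_real[OF integrable(1)]
      ext_integral_exists_real[OF integrable(2)]
    unfolding convex_order_ext_def by blast
  then show "(\<integral>x. \<phi> x \<partial>\<mu>) \<le> (\<integral>x. \<phi> x \<partial>\<nu>)"
    by (simp add: ext_integral_real integrable)
qed

lemma convex_order_lipschitz_imp_bdd_below: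
  fixes \<mu> \<nu> :: "'a::euclidean_space measure"
  assumes "P1 \<mu>" "P1 \<nu>" and order: "convex_order_lipschitz \<mu> \<nu>"
  shows "convex_order_bdd_below \<mu> \<nu>"
  unfolding convex_order_bdd_below_def
proof (intro allI impI, elim conjE exE)
  fix \<phi> :: "'a \<Rightarrow> ereal" and c :: real
  assume lsc: "lsc \<phi>" and proper: "proper_fun \<phi>" and convex: "ereal_convex \<phi>"
    and bounded: "\<forall>x. ereal c \<le> \<phi> x"
  let ?e = "\<lambda>n::nat. pasch_hausdorff \<phi> (real n)"
  have lip: "(real n)-lipschitz_on UNIV (?e n)" for n
    using proper bounded by (intro pasch_hausdorff_lipschitz) auto
  have "convex_on UNIV (?e n)" for n
    using proper bounded convex by (intro pasch_hausdorff_convex) auto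
  then have le: "(\<integral>x. ?e n x \<partial>\<mu>) \<le> (\<integral>x. ?e n x \<partial>\<nu>)" for n
    using order lip unfolding convex_order_lipschitz_def by blast
  have eq: "ext_integral M (\<lambda>x. ereal (?e n x)) = ereal (\<integral>x. ?e n x \<partial>M)" if "P1 M" for M n
    by (intro ext_integral_real integrable_lipschitz_P1[OF that lip])
  have lim: "(\<lambda>n. ext_integral M (\<lambda>x. ereal (?e n x))) \<longlonglongrightarrow> ext_integral M \<phi>" if "P1 M" for M
  proof (rule ext_integral_monotone_convergence)
    show "finite_measure M" using that unfolding P1_def by (auto intro: prob_space.finite_measure)
    show "(\<lambda>x. ereal (?e n x)) \<in> borel_measurable M" for n
      using that lipschitz_on_continuous_on[OF lip]
      by (intro borel_measurable_ereal) (simp add: measurable_P1 borel_measurable_continuous_onI)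
    show "\<phi> \<in> borel_measurable M"
      using that borel_measurable_lsc[OF lsc] by (simp add: measurable_P1)
    show "incseq (\<lambda>n x. ereal (?e n x))"
      using proper bounded by (auto simp: incseq_def le_fun_def intro!: pasch_hausdorff_mono)
    show "ereal c \<le> ereal (?e n x)" for n x
      using proper bounded by (auto intro!: pasch_hausdorff_ge)
    show "(\<lambda>n. ereal (?e n x)) \<longlonglongrightarrow> \<phi> x" for x
      using proper bounded lsc by (intro tendsto_pasch_hausdorff) auto
  qed
  show "ext_integral \<mu> \<phi> \<le> ext_integral \<nu> \<phi>"
    by (rule LIMSEQ_le[OF lim[OF assms(1)] lim[OF assms(2)]]) (simp add: eq assms le)
qed

theorem mainTheorem7:
  fixes \<mu> \<nu> :: "'a::euclidean_space measure"
  assumes "P1 \<mu>" and "P1 \<nu>"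
  shows "((\<forall>\<phi>::'a \<Rightarrow> ereal. lsc \<phi> \<and> proper_fun \<phi> \<and> ereal_convex \<phi>
              \<and> ext_integral_exists \<mu> \<phi> \<and> ext_integral_exists \<nu> \<phi>
              \<longrightarrow> ext_integral \<mu> \<phi> \<le> ext_integral \<nu> \<phi>)
       \<longleftrightarrow> (\<forall>\<phi>::'a \<Rightarrow> ereal. lsc \<phi> \<and> proper_fun \<phi> \<and> ereal_convex \<phi>
              \<and> (\<exists>c::real. \<forall>x. ereal c \<le> \<phi> x)
              \<longrightarrow> ext_integral \<mu> \<phi> \<le> ext_integral \<nu> \<phi>))
     \<and> ((\<forall>\<phi>::'a \<Rightarrow> ereal. lsc \<phi> \<and> proper_fun \<phi> \<and> ereal_convex \<phi>
              \<and> (\<exists>c::real. \<forall>x. ereal c \<le> \<phi> x)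
              \<longrightarrow> ext_integral \<mu> \<phi> \<le> ext_integral \<nu> \<phi>)
       \<longleftrightarrow> (\<forall>\<phi>::'a \<Rightarrow> real. (\<exists>L. L-lipschitz_on UNIV \<phi>) \<and> convex_on UNIV \<phi>
              \<longrightarrow> (\<integral>x. \<phi> x \<partial>\<mu>) \<le> (\<integral>x. \<phi> x \<partial>\<nu>)))"
proof -
  have "finite_measure \<mu>" "finite_measure \<nu>" "sets \<mu> = sets borel" "sets \<nu> = sets borel"
    using assms unfolding P1_def by (auto intro: prob_space.finite_measure)
  then have "convex_order_ext \<mu> \<nu> \<longleftrightarrow> convex_order_bdd_below \<mu> \<nu>"
    using convex_order_ext_imp_bdd_below convex_order_bdd_below_imp_ext by blast
  moreover have "convex_order_bdd_below \<mu> \<nu> \<longleftrightarrow> convex_order_lipschitz \<mu> \<nu>"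
    using calculation convex_order_ext_imp_lipschitz[OF assms]
      convex_order_lipschitz_imp_bdd_below[OF assms] by blast
  ultimately show ?thesis
    unfolding convex_order_ext_def convex_order_bdd_below_def convex_order_lipschitz_def
    by (rule conjI)
qed

end
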